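(* For all real $x\ge 1$ and $\sigma>0$, if $X\sim\mathcal{N}_{\mathbb{Z}}(\sigma^2)$ and $Y\sim\mathcal{N}(0,\sigma^2)$ (the continuous Gaussian with mean $0$ and variance $\sigma^2$), then $\Pr[X>x]\le\Pr[Y>\lfloor x\rfloor]$.
   Context: The discrete Gaussian distribution $\mathcal{N}_{\mathbb{Z}}(\sigma^2)$ centered at $0$ is the distribution on $\mathbb{Z}$ with $\Pr[X=x]=e^{-x^2/(2\sigma^2)}/\sum_{u\in\mathbb{Z}}e^{-u^2/(2\sigma^2)}$ for $x\in\mathbb{Z}$. *)

theory Defs
  imports "HOL-Probability.Probability"
begin

definition dgauss_weight :: "real \<Rightarrow> int \<Rightarrow> real" where
  "dgauss_weight \<sigma> u = exp (- (real_of_int u)\<^sup>2 / (2 * \<sigma>\<^sup>2))"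

definition dgauss_pmf :: "real \<Rightarrow> int \<Rightarrow> real" where
  "dgauss_pmf \<sigma> x = dgauss_weight \<sigma> x / (\<Sum>\<^sub>\<infinity>u\<in>(UNIV::int set). dgauss_weight \<sigma> u)"

definition dgauss_prob :: "real \<Rightarrow> int set \<Rightarrow> real" where
  "dgauss_prob \<sigma> A = (\<Sum>\<^sub>\<infinity>x\<in>A. dgauss_pmf \<sigma> x)"

text \<open>The continuous Gaussian N(0, sigma^2) as a measure on the reals
  (normal_density takes mean and standard deviation).\<close>
definition cgauss :: "real \<Rightarrow> real measure" where
  "cgauss \<sigma> = density lborel (normal_density 0 \<sigma>)"

end

theory Submission
  imports Defs
begin

text \<open>Let \<open>W k = exp (-k\<^sup>2/(2\<sigma>\<^sup>2))\<close> and \<open>N = \<lfloor>x\<rfloor>\<close>. Log-concavity of the Gaussian shows that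
  for integers \<open>j \<le> m\<close> the ratio \<open>Pr[Y \<in> (m-1, m]] / W m\<close> dominates
  \<open>Pr[Y \<in> (j-1, j]] / W j\<close>. Summing over \<open>1 \<le> j \<le> N < m\<close> gives
  \<open>T \<cdot> Pr[0 < Y \<le> N] \<le> \<Sigma> \<cdot> Pr[Y > N]\<close>, where \<open>\<Sigma> = W 1 + \<dots> + W N\<close> and \<open>T = W (N+1) + W (N+2) + \<dots>\<close>.
  Since \<open>Pr[Y > 0] = 1/2\<close> and the total weight is \<open>1 + 2(\<Sigma> + T)\<close>, this rearranges to
  \<open>T \<le> Pr[Y > N] \<cdot> (1 + 2(\<Sigma> + T))\<close>, which is the claim.\<close>

lemma gaussian_log_concave_shift:
  fixes c j t d :: real
  assumes "c > 0" "t \<le> j" "0 \<le> d"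
  shows "exp (- (j + d)\<^sup>2 / c) * exp (- t\<^sup>2 / c) \<le> exp (- j\<^sup>2 / c) * exp (- (t + d)\<^sup>2 / c)"
proof -
  have "(j + d)\<^sup>2 + t\<^sup>2 - j\<^sup>2 - (t + d)\<^sup>2 = 2 * d * (j - t)"
    by (simp add: power2_eq_square algebra_simps)
  moreover have "0 \<le> 2 * d * (j - t)"
    using assms by simp
  ultimately have "(j\<^sup>2 + (t + d)\<^sup>2) / c \<le> ((j + d)\<^sup>2 + t\<^sup>2) / c"
    using assms(1) by (intro divide_right_mono) linarith+
  then show ?thesis
    by (simp add: exp_add[symmetric] add_divide_distrib)
qed

lemma prob_space_cgauss: "\<sigma> > 0 \<Longrightarrow> prob_space (cgauss \<sigma>)"
  unfolding cgauss_def by (rule prob_space_normal_density)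

lemma sets_cgauss [simp]: "sets (cgauss \<sigma>) = sets borel"
  by (simp add: cgauss_def)

lemma space_cgauss [simp]: "space (cgauss \<sigma>) = UNIV"
  by (simp add: cgauss_def)

lemma emeasure_cgauss:
  "A \<in> sets borel \<Longrightarrow>
     emeasure (cgauss \<sigma>) A = (\<integral>\<^sup>+ u. ennreal (normal_density 0 \<sigma> u) * indicator A u \<partial>lborel)"
  unfolding cgauss_def by (subst emeasure_density) auto

lemma emeasure_cgauss_unit_interval:
  fixes a :: real
  shows "emeasure (cgauss \<sigma>) {a<..a+1}
           = (\<integral>\<^sup>+ s. ennreal (normal_density 0 \<sigma> (a + s)) * indicator {0<..1} s \<partial>lborel)"
proof -
  have "emeasure (cgauss \<sigma>) {a<..a+1}
          = (\<integral>\<^sup>+ u. ennreal (normal_density 0 \<sigma> u) * indicator {a<..a+1} u \<partial>lborel)"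
    by (simp add: emeasure_cgauss)
  also have "\<dots> = (\<integral>\<^sup>+ s. ennreal (normal_density 0 \<sigma> (a + 1 * s)) * indicator {a<..a+1} (a + 1 * s) \<partial>lborel)"
    by (subst nn_integral_real_affine[where c=1 and t=a]) auto
  also have "\<dots> = (\<integral>\<^sup>+ s. ennreal (normal_density 0 \<sigma> (a + s)) * indicator {0<..1} s \<partial>lborel)"
    by (rule nn_integral_cong) (auto simp: indicator_def)
  finally show ?thesis .
qed

lemma cgauss_unit_interval_weighted_mono:
  fixes j m :: int
  assumes "\<sigma> > 0" "j \<le> m"
  shows "dgauss_weight \<sigma> m * measure (cgauss \<sigma>) {of_int j - 1<..of_int j}
           \<le> dgauss_weight \<sigma> j * measure (cgauss \<sigma>) {of_int m - 1<..of_int m}"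
proof -
  interpret prob_space "cgauss \<sigma>"
    using assms(1) by (rule prob_space_cgauss)
  let ?W = "dgauss_weight \<sigma>" and ?f = "normal_density 0 \<sigma>"
  have pointwise: "?W m * ?f (of_int j - 1 + s) \<le> ?W j * ?f (of_int m - 1 + s)"
    if "0 \<le> s" "s \<le> 1" for s
  proof -
    have "exp (- (of_int j + of_int (m - j))\<^sup>2 / (2 * \<sigma>\<^sup>2)) * exp (- (of_int j - 1 + s)\<^sup>2 / (2 * \<sigma>\<^sup>2))
        \<le> exp (- (of_int j)\<^sup>2 / (2 * \<sigma>\<^sup>2)) * exp (- (of_int j - 1 + s + of_int (m - j))\<^sup>2 / (2 * \<sigma>\<^sup>2))"
      using assms that by (intro gaussian_log_concave_shift) auto
    then show ?thesis
      by (simp add: dgauss_weight_def normal_density_def algebra_simps divide_right_mono)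
  qed
  have "ennreal (?W m) * emeasure (cgauss \<sigma>) {of_int j - 1<..of_int j - 1 + 1}
      = (\<integral>\<^sup>+ s. ennreal (?W m * ?f (of_int j - 1 + s)) * indicator {0<..1} s \<partial>lborel)"
    using emeasure_cgauss_unit_interval[of \<sigma> "of_int j - 1"]
    by (simp add: nn_integral_cmult[symmetric] ennreal_mult mult.assoc dgauss_weight_def)
  also have "\<dots> \<le> (\<integral>\<^sup>+ s. ennreal (?W j * ?f (of_int m - 1 + s)) * indicator {0<..1} s \<partial>lborel)"
    by (intro nn_integral_mono) (auto simp: indicator_def intro!: ennreal_leI pointwise)
  also have "\<dots> = ennreal (?W j) * emeasure (cgauss \<sigma>) {of_int m - 1<..of_int m - 1 + 1}"
    using emeasure_cgauss_unit_interval[of \<sigma> "of_int m - 1"]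
    by (simp add: nn_integral_cmult[symmetric] ennreal_mult mult.assoc dgauss_weight_def)
  finally show ?thesis
    by (simp add: emeasure_eq_measure ennreal_mult[symmetric] dgauss_weight_def)
qed

lemma measure_cgauss_Ioi_0:
  assumes "\<sigma> > 0"
  shows "measure (cgauss \<sigma>) {0<..} = 1/2"
proof -
  interpret prob_space "cgauss \<sigma>"
    using assms by (rule prob_space_cgauss)
  have reflect: "emeasure (cgauss \<sigma>) {..<0} = emeasure (cgauss \<sigma>) {0<..}"
  proof -
    have "emeasure (cgauss \<sigma>) {..<0}
        = ennreal \<bar>-1\<bar> * (\<integral>\<^sup>+ u. ennreal (normal_density 0 \<sigma> (0 + (-1) * u))
                                    * indicator {..<0} (0 + (-1) * u) \<partial>lborel)"
      by (simp only: emeasure_cgauss borel_open open_lessThan) (rule nn_integral_real_affine; simp)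
    also have "\<dots> = emeasure (cgauss \<sigma>) {0<..}"
      by (simp add: emeasure_cgauss normal_density_def indicator_def)
    finally show ?thesis .
  qed
  have null: "emeasure (cgauss \<sigma>) {0} = 0"
    by (simp add: emeasure_cgauss nn_integral_indicator_singleton)
  have "{..<0} \<union> {0} \<union> {0<..} = space (cgauss \<sigma>)"
    by auto
  then have "1 = measure (cgauss \<sigma>) ({..<0} \<union> {0} \<union> {0<..})"
    using prob_space by simp
  also have "\<dots> = measure (cgauss \<sigma>) ({..<0} \<union> {0}) + measure (cgauss \<sigma>) {0<..}"
    by (rule finite_measure_Union) auto
  also have "measure (cgauss \<sigma>) ({..<0} \<union> {0}) = measure (cgauss \<sigma>) {..<0} + measure (cgauss \<sigma>) {0}"
    by (rule finite_measure_Union) auto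
  finally show ?thesis
    using reflect null by (simp add: emeasure_eq_measure)
qed

lemma measure_Ioc_int_sum:
  fixes M :: "real measure" and a b :: int
  assumes "finite_measure M" "sets M = sets borel" "a \<le> b"
  shows "measure M {of_int a<..of_int b} = (\<Sum>i\<in>{a<..b}. measure M {of_int i - 1<..of_int i})"
  using assms(3)
proof (induction b rule: int_ge_induct)
  case base
  then show ?case by simp
next
  case (step b)
  have "{real_of_int a<..of_int (b + 1)} = {of_int a<..of_int b} \<union> {of_int (b + 1) - 1<..of_int (b + 1)}"
    using step.hyps by auto
  moreover have "{a<..b + 1} = insert (b + 1) {a<..b}"
    using step.hyps by auto
  ultimately show ?case
    using step assms(1,2) by (simp add: finite_measure.finite_measure_Union)
qed

lemma dgauss_weight_tail_finite:
  fixes N M :: int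
  assumes "\<sigma> > 0" "0 \<le> N" "N \<le> M"
  shows "(\<Sum>m\<in>{N<..M}. dgauss_weight \<sigma> m) * measure (cgauss \<sigma>) {0<..of_int N}
           \<le> (\<Sum>j\<in>{0<..N}. dgauss_weight \<sigma> j) * measure (cgauss \<sigma>) {of_int N<..}"
proof -
  interpret prob_space "cgauss \<sigma>"
    using assms(1) by (rule prob_space_cgauss)
  let ?W = "dgauss_weight \<sigma>"
  let ?\<mu> = "\<lambda>i::int. measure (cgauss \<sigma>) {of_int i - 1<..of_int i}"
  have "(\<Sum>m\<in>{N<..M}. ?W m) * measure (cgauss \<sigma>) {0<..of_int N}
      = (\<Sum>m\<in>{N<..M}. \<Sum>j\<in>{0<..N}. ?W m * ?\<mu> j)"
    using measure_Ioc_int_sum[OF finite_measure_axioms, of 0 N] assms(2) by (simp add: sum_product)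
  also have "\<dots> \<le> (\<Sum>m\<in>{N<..M}. \<Sum>j\<in>{0<..N}. ?W j * ?\<mu> m)"
    using assms(1) by (intro sum_mono cgauss_unit_interval_weighted_mono) auto
  also have "\<dots> = (\<Sum>j\<in>{0<..N}. ?W j) * measure (cgauss \<sigma>) {of_int N<..of_int M}"
    using measure_Ioc_int_sum[OF finite_measure_axioms, of N M] assms(3)
    by (simp add: sum_product sum.swap[of _ "{0<..N}"])
  also have "\<dots> \<le> (\<Sum>j\<in>{0<..N}. ?W j) * measure (cgauss \<sigma>) {of_int N<..}"
    by (intro mult_left_mono finite_measure_mono sum_nonneg) (auto simp: dgauss_weight_def)
  finally show ?thesis .
qed

lemma dgauss_weight_tail:
  fixes N :: int
  assumes "\<sigma> > 0" "0 \<le> N" "dgauss_weight \<sigma> summable_on {N<..}"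
  shows "infsum (dgauss_weight \<sigma>) {N<..} * measure (cgauss \<sigma>) {0<..of_int N}
           \<le> (\<Sum>j\<in>{0<..N}. dgauss_weight \<sigma> j) * measure (cgauss \<sigma>) {of_int N<..}"
proof -
  let ?W = "dgauss_weight \<sigma>" and ?A = "measure (cgauss \<sigma>) {0<..of_int N}"
  have "infsum (\<lambda>m. ?W m * ?A) {N<..}
          \<le> (\<Sum>j\<in>{0<..N}. ?W j) * measure (cgauss \<sigma>) {of_int N<..}"
  proof (rule infsum_le_finite_sums)
    show "(\<lambda>m. ?W m * ?A) summable_on {N<..}"
      using assms(3) by (rule summable_on_cmult_left)
  next
    fix F assume F: "finite F" "F \<subseteq> {N<..}"
    define M where "M = Max (insert N F)"
    have "N \<le> M" "F \<subseteq> {N<..M}"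
      using F by (auto simp: M_def)
    then have "sum (\<lambda>m. ?W m * ?A) F \<le> (\<Sum>m\<in>{N<..M}. ?W m) * ?A"
      by (simp add: sum_distrib_right[symmetric] mult_right_mono sum_mono2 dgauss_weight_def)
    also have "\<dots> \<le> (\<Sum>j\<in>{0<..N}. ?W j) * measure (cgauss \<sigma>) {of_int N<..}"
      using assms(1,2) \<open>N \<le> M\<close> by (rule dgauss_weight_tail_finite)
    finally show "sum (\<lambda>m. ?W m * ?A) F \<le> \<dots>" .
  qed
  then show ?thesis
    by (simp add: infsum_cmult_left')
qed

lemma infsum_int_even:
  fixes f :: "int \<Rightarrow> real"
  assumes "f summable_on UNIV" "\<And>k. f (- k) = f k"
  shows "infsum f UNIV = f 0 + 2 * infsum f {0<..}"
proof -
  have sub: "f summable_on A" for A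
    using assms(1) by (rule summable_on_subset_banach) simp
  have "infsum f {..<0} = infsum f (uminus ` {0<..})"
    by simp
  also have "\<dots> = infsum (f \<circ> uminus) {0<..}"
    by (rule infsum_reindex) simp
  also have "\<dots> = infsum f {0<..}"
    using assms(2) by (simp add: comp_def)
  finally have "infsum f {..<0} = infsum f {0<..}" .
  moreover have "infsum f UNIV = infsum f ({..<0} \<union> {0} \<union> {0<..})"
    by (rule arg_cong[of _ _ "infsum f"]) auto
  moreover have "\<dots> = infsum f ({..<0} \<union> {0}) + infsum f {0<..}"
    by (rule infsum_Un_disjoint[OF sub sub]) auto
  moreover have "infsum f ({..<0} \<union> {0}) = infsum f {..<0} + f 0"
    by (subst infsum_Un_disjoint[OF sub sub]) auto
  ultimately show ?thesis
    by simp
qed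

lemma dgauss_weight_tail_le_cgauss_tail:
  fixes N :: int
  assumes "\<sigma> > 0" "0 \<le> N" "dgauss_weight \<sigma> summable_on UNIV"
  shows "infsum (dgauss_weight \<sigma>) {N<..}
           \<le> measure (cgauss \<sigma>) {of_int N<..} * infsum (dgauss_weight \<sigma>) UNIV"
proof -
  interpret prob_space "cgauss \<sigma>"
    using assms(1) by (rule prob_space_cgauss)
  let ?W = "dgauss_weight \<sigma>"
  define T where "T = infsum ?W {N<..}"
  define \<Sigma> where "\<Sigma> = (\<Sum>j\<in>{0<..N}. ?W j)"
  define A where "A = measure (cgauss \<sigma>) {0<..of_int N}"
  define I where "I = measure (cgauss \<sigma>) {of_int N<..}"
  have sub: "?W summable_on B" for B
    using assms(3) by (rule summable_on_subset_banach) simp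
  have "infsum ?W {0<..} = infsum ?W ({0<..N} \<union> {N<..})"
    using assms(2) by (intro arg_cong[of _ _ "infsum ?W"]) auto
  also have "\<dots> = \<Sigma> + T"
    unfolding \<Sigma>_def T_def by (subst infsum_Un_disjoint[OF sub sub]) auto
  finally have positive_part: "infsum ?W {0<..} = \<Sigma> + T" .
  have "infsum ?W UNIV = ?W 0 + 2 * infsum ?W {0<..}"
    using assms(3) by (rule infsum_int_even) (simp add: dgauss_weight_def)
  then have total: "infsum ?W UNIV = 1 + 2 * (\<Sigma> + T)"
    unfolding positive_part by (simp add: dgauss_weight_def)
  have "measure (cgauss \<sigma>) {0<..} = measure (cgauss \<sigma>) ({0<..of_int N} \<union> {of_int N<..})"
    using assms(2) by (intro arg_cong[of _ _ "measure (cgauss \<sigma>)"]) auto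
  also have "\<dots> = A + I"
    unfolding A_def I_def by (rule finite_measure_Union) auto
  finally have half: "A + I = 1/2"
    using measure_cgauss_Ioi_0[OF assms(1)] by simp
  have tail: "T * A \<le> \<Sigma> * I"
    unfolding T_def A_def \<Sigma>_def I_def using assms(1,2) sub by (rule dgauss_weight_tail)
  have "T = T * (2 * (A + I))"
    using half by simp
  also have "\<dots> = 2 * (T * A) + 2 * T * I"
    by (simp add: algebra_simps)
  also have "\<dots> \<le> 2 * (\<Sigma> * I) + 2 * T * I"
    using tail by simp
  also have "\<dots> \<le> I * (1 + 2 * (\<Sigma> + T))"
    by (simp add: I_def algebra_simps)
  finally show ?thesis
    by (simp add: total T_def I_def)
qed

lemma dgauss_prob_eq: "dgauss_prob \<sigma> A = infsum (dgauss_weight \<sigma>) A / infsum (dgauss_weight \<sigma>) UNIV"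
  unfolding dgauss_prob_def dgauss_pmf_def divide_inverse by (rule infsum_cmult_left')

theorem mainTheorem5:
  fixes x \<sigma> :: real
  assumes "x \<ge> 1" and "\<sigma> > 0"
  shows "dgauss_prob \<sigma> {k. real_of_int k > x}
           \<le> measure (cgauss \<sigma>) {y. y > real_of_int \<lfloor>x\<rfloor>}"
proof -
  define N where "N = \<lfloor>x\<rfloor>"
  let ?S = "infsum (dgauss_weight \<sigma>) UNIV" and ?I = "measure (cgauss \<sigma>) {of_int N<..}"
  have "{k. real_of_int k > x} = {N<..}" "{y. y > real_of_int \<lfloor>x\<rfloor>} = {of_int N<..}"
    by (auto simp: N_def floor_less_iff less_floor_iff)
  then have lhs: "dgauss_prob \<sigma> {k. real_of_int k > x} = infsum (dgauss_weight \<sigma>) {N<..} / ?S"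
    and rhs: "measure (cgauss \<sigma>) {y. y > real_of_int \<lfloor>x\<rfloor>} = ?I"
    by (simp_all add: dgauss_prob_eq)
  show ?thesis
  proof (cases "dgauss_weight \<sigma> summable_on UNIV")
    case True
    have "0 \<le> N"
      using assms(1) by (simp add: N_def)
    then have "infsum (dgauss_weight \<sigma>) {N<..} \<le> ?I * ?S"
      using assms(2) True by (intro dgauss_weight_tail_le_cgauss_tail)
    moreover have "0 \<le> ?S"
      by (simp add: infsum_nonneg dgauss_weight_def)
    ultimately show ?thesis
      unfolding lhs rhs by (cases "?S = 0") (auto simp: pos_divide_le_eq)
  next
    case False
    \<comment> \<open>then the normalising constant \<open>?S\<close> is the junk value 0, and so is the left-hand side\<close>
    then show ?thesis
      unfolding lhs rhs by (simp add: infsum_not_exists)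
  qed
qed

end
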